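(* Let $D$ be a transportability diagram and let $G$ be the subgraph obtained by removing all transportability nodes $T$ from $D$. Let $X,Y,Z$ be disjoint sets of vertices of $D$ containing no transportability nodes. Then $X$ and $Y$ are d-separated by $Z\cup T'$ in $D$ for every $T'\subseteq T$ if and only if $X$ and $Y$ are d-separated by $Z$ in $G$.
   Context: A (semi-Markovian) graph $G=(V,E)$ has directed edges forming an acyclic graph and bidirected edges $V_j\leftrightarrow V_k$. A transportability diagram $D$ is such a graph $G$ together with a set $T$ of additional vertices (transportability nodes), each having exactly one incident edge, a directed edge $T_j\to V_j$ with $V_j\in V$. d-separation: a path is blocked by a set $Z$ if it contains a non-collider $M\in Z$ (patterns $I\to M\to J$, $I\leftrightarrow M\to J$, $I\leftarrow M\to J$ and their reversals) or a collider $M$ (patterns $I\to M\leftarrow J$, $I\leftrightarrow M\leftarrow J$, $I\leftrightarrow M\leftrightarrow J$) with $\mathrm{De}(M)\cap Z=\emptyset$, where $\mathrm{De}(M)$ is $M$ together with its descendants; disjoint $X,Y$ are d-separated by $Z$ if every path between $X$ and $Y$ is blocked by $Z$. *)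

theory Defs
  imports Main
begin

text \<open>A graph is given by a vertex set W, a set Ed of directed edges (a,b) meaning a \<rightarrow> b,
  and a set Eb of bidirected edges; (a,b) \<in> Eb or (b,a) \<in> Eb means a \<leftrightarrow> b.\<close>

definition semi_markovian :: "'v set \<Rightarrow> ('v \<times> 'v) set \<Rightarrow> ('v \<times> 'v) set \<Rightarrow> bool" where
  "semi_markovian W Ed Eb \<longleftrightarrow> finite W \<and> Ed \<subseteq> W \<times> W \<and> Eb \<subseteq> W \<times> W
     \<and> acyclic Ed \<and> (\<forall>a. (a,a) \<notin> Eb)"

text \<open>A transportability diagram: the graph G on V (with directed edges Ed \<inter> V\<times>V and
  bidirected edges Eb) plus the transportability nodes T, each having exactly one incident edge,
  a directed edge t \<rightarrow> v with v \<in> V.\<close>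

definition transport_diagram ::
  "'v set \<Rightarrow> 'v set \<Rightarrow> ('v \<times> 'v) set \<Rightarrow> ('v \<times> 'v) set \<Rightarrow> bool" where
  "transport_diagram V T Ed Eb \<longleftrightarrow> V \<inter> T = {} \<and> semi_markovian (V \<union> T) Ed Eb
     \<and> (\<forall>t\<in>T. \<exists>v\<in>V. {e\<in>Ed. fst e = t \<or> snd e = t} = {(t,v)}
                      \<and> (\<forall>e\<in>Eb. fst e \<noteq> t \<and> snd e \<noteq> t))"

datatype ekind = Fwd | Bwd | Bi

fun has_edge :: "('v \<times> 'v) set \<Rightarrow> ('v \<times> 'v) set \<Rightarrow> 'v \<Rightarrow> ekind \<Rightarrow> 'v \<Rightarrow> bool" where
  "has_edge Ed Eb a Fwd b \<longleftrightarrow> (a,b) \<in> Ed"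
| "has_edge Ed Eb a Bwd b \<longleftrightarrow> (b,a) \<in> Ed"
| "has_edge Ed Eb a Bi b \<longleftrightarrow> (a,b) \<in> Eb \<or> (b,a) \<in> Eb"

definition is_path :: "'v set \<Rightarrow> ('v \<times> 'v) set \<Rightarrow> ('v \<times> 'v) set \<Rightarrow> 'v list \<Rightarrow> ekind list \<Rightarrow> bool" where
  "is_path W Ed Eb vs es \<longleftrightarrow> vs \<noteq> [] \<and> length vs = Suc (length es) \<and> distinct vs
     \<and> set vs \<subseteq> W \<and> (\<forall>i < length es. has_edge Ed Eb (vs!i) (es!i) (vs!Suc i))"

text \<open>An interior vertex is a collider iff both incident path edges have an arrowhead at it.\<close>
definition collider :: "ekind \<Rightarrow> ekind \<Rightarrow> bool" where
  "collider e1 e2 \<longleftrightarrow> e1 \<in> {Fwd, Bi} \<and> e2 \<in> {Bwd, Bi}"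

definition De :: "('v \<times> 'v) set \<Rightarrow> 'v \<Rightarrow> 'v set" where
  "De Ed m = Ed\<^sup>* `` {m}"

definition blocked :: "('v \<times> 'v) set \<Rightarrow> 'v set \<Rightarrow> 'v list \<Rightarrow> ekind list \<Rightarrow> bool" where
  "blocked Ed Z vs es \<longleftrightarrow> (\<exists>i. 0 < i \<and> i < length es \<and>
      ((\<not> collider (es!(i-1)) (es!i) \<and> vs!i \<in> Z)
       \<or> (collider (es!(i-1)) (es!i) \<and> De Ed (vs!i) \<inter> Z = {})))"

definition d_separated ::
  "'v set \<Rightarrow> ('v \<times> 'v) set \<Rightarrow> ('v \<times> 'v) set \<Rightarrow> 'v set \<Rightarrow> 'v set \<Rightarrow> 'v set \<Rightarrow> bool" where
  "d_separated W Ed Eb X Y Z \<longleftrightarrow> (\<forall>vs es. is_path W Ed Eb vs es \<and> hd vs \<in> X \<and> last vs \<in> Y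
       \<longrightarrow> blocked Ed Z vs es)"

end

theory Submission
  imports Defs
begin

text \<open>A transportability node has a single neighbour, so it cannot be an interior vertex of a
  path, whose two neighbours are distinct; hence every path between vertices of V is a path of G.
  No edge leads from V into T, so descendants of vertices of V are the same in D and G and avoid T.
  Consequently adding nodes of T to the conditioning set never changes whether such a path is
  blocked.\<close>

lemma has_edge_restrict:
  "has_edge (Ed \<inter> V \<times> V) (Eb \<inter> V \<times> V) a k b \<longleftrightarrow> has_edge Ed Eb a k b \<and> a \<in> V \<and> b \<in> V"
  by (cases k) auto

lemma is_path_restrict:
  assumes "V \<subseteq> W"
  shows "is_path V (Ed \<inter> V \<times> V) (Eb \<inter> V \<times> V) vs es \<longleftrightarrow> is_path W Ed Eb vs es \<and> set vs \<subseteq> V"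
proof -
  have "vs!i \<in> set vs \<and> vs!Suc i \<in> set vs" if "length vs = Suc (length es)" "i < length es" for i
    using that by simp
  then show ?thesis
    unfolding is_path_def has_edge_restrict using assms by blast
qed

lemma is_path_interior_vertex:
  assumes "is_path W Ed Eb vs es" and "0 < i" and "i < length es"
  shows "has_edge Ed Eb (vs!(i-1)) (es!(i-1)) (vs!i)" and "has_edge Ed Eb (vs!i) (es!i) (vs!Suc i)"
    and "vs!(i-1) \<noteq> vs!Suc i"
proof -
  have path: "length vs = Suc (length es)" "distinct vs"
    "\<And>j. j < length es \<Longrightarrow> has_edge Ed Eb (vs!j) (es!j) (vs!Suc j)"
    using assms(1) unfolding is_path_def by auto
  show "has_edge Ed Eb (vs!(i-1)) (es!(i-1)) (vs!i)"
    using path(3)[of "i-1"] assms(2,3) by simp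
  show "has_edge Ed Eb (vs!i) (es!i) (vs!Suc i)"
    using path(3) assms(3) .
  show "vs!(i-1) \<noteq> vs!Suc i"
    using path(1,2) assms(2,3) by (simp add: nth_eq_iff_index_eq)
qed

lemma is_path_vertex_cases [consumes 2]:
  assumes "is_path W Ed Eb vs es" and "x \<in> set vs"
  obtains (hd) "x = hd vs" | (last) "x = last vs"
    | (interior) i where "0 < i" "i < length es" "x = vs!i"
proof -
  have len: "vs \<noteq> []" "length vs = Suc (length es)"
    using assms(1) unfolding is_path_def by auto
  obtain i where i: "i < length vs" "x = vs!i"
    using assms(2) by (metis in_set_conv_nth)
  consider "i = 0" | "i = length es" | "0 < i" "i < length es"
    using i(1) len(2) by linarith
  then show thesis
    using that i len by cases (auto simp: hd_conv_nth last_conv_nth)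
qed

lemma blocked_cong:
  assumes "length es < length vs"
    and "\<And>v. v \<in> set vs \<Longrightarrow> De Ed v = De Ed' v"
    and "\<And>v. v \<in> set vs \<Longrightarrow> De Ed v \<inter> Z = De Ed v \<inter> Z'"
  shows "blocked Ed Z vs es \<longleftrightarrow> blocked Ed' Z' vs es"
proof -
  have "v \<in> Z \<longleftrightarrow> v \<in> Z'" if "v \<in> set vs" for v
    using assms(3)[OF that] by (auto simp: De_def)
  moreover have "vs!i \<in> set vs" if "i < length es" for i
    using that assms(1) by simp
  ultimately show ?thesis
    unfolding blocked_def using assms(2,3) by (metis (no_types, lifting) order.strict_trans)
qed

lemma De_restrict_closed:
  assumes "Ed `` V \<subseteq> V" and "m \<in> V"
  shows "De Ed m = De (Ed \<inter> V \<times> V) m" and "De Ed m \<subseteq> V"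
proof -
  have "x \<in> V \<and> (m, x) \<in> (Ed \<inter> V \<times> V)\<^sup>*" if "(m, x) \<in> Ed\<^sup>*" for x
    using that
  proof (induction rule: rtrancl_induct)
    case base
    then show ?case using assms(2) by simp
  next
    case (step y z)
    then have "z \<in> V" using assms(1) by blast
    with step show ?case by (blast intro: rtrancl_into_rtrancl)
  qed
  moreover have "(Ed \<inter> V \<times> V)\<^sup>* \<subseteq> Ed\<^sup>*"
    by (simp add: rtrancl_mono)
  ultimately show "De Ed m = De (Ed \<inter> V \<times> V) m" and "De Ed m \<subseteq> V"
    unfolding De_def by blast+
qed

lemma transport_node_edges:
  assumes "transport_diagram V T Ed Eb" and "t \<in> T"
  obtains v where "v \<in> V" "\<And>e. e \<in> Ed \<Longrightarrow> fst e = t \<or> snd e = t \<Longrightarrow> e = (t, v)"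
    and "\<And>e. e \<in> Eb \<Longrightarrow> fst e \<noteq> t \<and> snd e \<noteq> t"
proof -
  obtain v where "v \<in> V" "{e \<in> Ed. fst e = t \<or> snd e = t} = {(t, v)}"
    "\<forall>e\<in>Eb. fst e \<noteq> t \<and> snd e \<noteq> t"
    using assms unfolding transport_diagram_def by blast
  then show thesis
    using that by blast
qed

lemma transport_node_neighbours_eq:
  assumes "transport_diagram V T Ed Eb" and "t \<in> T"
    and "has_edge Ed Eb a k t" and "has_edge Ed Eb t k' b"
  shows "a = b"
proof -
  obtain v where "\<And>e. e \<in> Ed \<Longrightarrow> fst e = t \<or> snd e = t \<Longrightarrow> e = (t, v)"
    and "\<And>e. e \<in> Eb \<Longrightarrow> fst e \<noteq> t \<and> snd e \<noteq> t"
    using transport_node_edges[OF assms(1,2)] by metis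
  note edges = this
  have "a = v"
    using edges assms(3) by (cases k) force+
  moreover have "b = v"
    using edges assms(4) by (cases k') force+
  ultimately show ?thesis by simp
qed

lemma transport_successors_closed:
  assumes "transport_diagram V T Ed Eb"
  shows "Ed `` V \<subseteq> V"
proof
  fix y assume "y \<in> Ed `` V"
  then obtain x where x: "x \<in> V" "(x, y) \<in> Ed" by blast
  have "Ed \<subseteq> (V \<union> T) \<times> (V \<union> T)"
    using assms unfolding transport_diagram_def semi_markovian_def by auto
  show "y \<in> V"
  proof (rule ccontr)
    assume "y \<notin> V"
    with x(2) \<open>Ed \<subseteq> (V \<union> T) \<times> (V \<union> T)\<close> have "y \<in> T" by blast
    then obtain v where "\<And>e. e \<in> Ed \<Longrightarrow> fst e = y \<or> snd e = y \<Longrightarrow> e = (y, v)"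
      using transport_node_edges[OF assms] by metis
    then have "x = y" using x(2) by fastforce
    with x(1) \<open>y \<notin> V\<close> show False by simp
  qed
qed

lemma transport_path_in_V:
  assumes "transport_diagram V T Ed Eb" and "is_path (V \<union> T) Ed Eb vs es"
    and "hd vs \<in> V" and "last vs \<in> V"
  shows "set vs \<subseteq> V"
proof
  fix x assume "x \<in> set vs"
  with assms(2) show "x \<in> V"
  proof (cases rule: is_path_vertex_cases)
    case (interior i)
    have "x \<in> V \<union> T"
      using assms(2) \<open>x \<in> set vs\<close> unfolding is_path_def by blast
    moreover have "x \<notin> T"
      using transport_node_neighbours_eq[OF assms(1)]
        is_path_interior_vertex[OF assms(2) interior(1,2)] interior(3) by metis
    ultimately show ?thesis by blast
  qed (use assms(3,4) in simp_all)
qed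

lemma transport_blocked_iff:
  assumes "transport_diagram V T Ed Eb" and "T' \<subseteq> T"
    and "is_path V (Ed \<inter> V \<times> V) (Eb \<inter> V \<times> V) vs es"
  shows "blocked Ed (Z \<union> T') vs es \<longleftrightarrow> blocked (Ed \<inter> V \<times> V) Z vs es"
proof (rule blocked_cong)
  have "V \<inter> T = {}"
    using assms(1) unfolding transport_diagram_def by blast
  have in_V: "set vs \<subseteq> V" and "length vs = Suc (length es)"
    using assms(3) unfolding is_path_def by auto
  then show "length es < length vs" by simp
  fix v assume "v \<in> set vs"
  then have "v \<in> V" using in_V by blast
  note De_V = De_restrict_closed[OF transport_successors_closed[OF assms(1)] this]
  show "De Ed v = De (Ed \<inter> V \<times> V) v"
    using De_V(1) .
  show "De Ed v \<inter> (Z \<union> T') = De Ed v \<inter> Z"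
    using De_V(2) \<open>V \<inter> T = {}\<close> assms(2) by blast
qed

lemma transport_d_separated_iff:
  assumes "transport_diagram V T Ed Eb" and "T' \<subseteq> T" and "X \<subseteq> V" and "Y \<subseteq> V"
  shows "d_separated (V \<union> T) Ed Eb X Y (Z \<union> T')
         \<longleftrightarrow> d_separated V (Ed \<inter> V \<times> V) (Eb \<inter> V \<times> V) X Y Z"
proof -
  have same_paths: "is_path (V \<union> T) Ed Eb vs es \<longleftrightarrow> is_path V (Ed \<inter> V \<times> V) (Eb \<inter> V \<times> V) vs es"
    if "hd vs \<in> X" and "last vs \<in> Y" for vs es
    using is_path_restrict[of V "V \<union> T"] transport_path_in_V[OF assms(1)] that assms(3,4)
    by blast
  show ?thesis
    unfolding d_separated_def using same_paths transport_blocked_iff[OF assms(1,2)] by blast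
qed

theorem lemma1:
  assumes "transport_diagram V T Ed Eb"
    and "X \<subseteq> V" and "Y \<subseteq> V" and "Z \<subseteq> V"
    and "X \<inter> Y = {}" and "X \<inter> Z = {}" and "Y \<inter> Z = {}"
  shows "(\<forall>T' \<subseteq> T. d_separated (V \<union> T) Ed Eb X Y (Z \<union> T'))
         \<longleftrightarrow> d_separated V (Ed \<inter> (V \<times> V)) (Eb \<inter> (V \<times> V)) X Y Z"
  using transport_d_separated_iff[OF assms(1) _ assms(2,3)] by blast

end
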